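(* Let $(\mathcal{X},d)$ be a finite metric space, $\mathcal{P}=\{P_1,\dots,P_t\}$ a partition of $\mathcal{X}$, and $b\ge 0$ an integer. For each $i\in[t]$, run the greedy (farthest-first) $k$-center procedure on $P_i$ with $k=b+1$, producing an ordered list of centers, and for $j\in[b+1]$ let $R_{i,j}$ be the first $j$ centers and $\hat c_i(j)=\mathrm{cost}(P_i,R_{i,j})$. Let $(\hat b_1,\dots,\hat b_t)$ be an optimal solution of $$\min \sum_{i=1}^t \hat c_i(b_i+1)\quad\text{subject to}\quad \sum_{i=1}^t b_i=b,\ b_i\in\{0,1,2,\dots\}\ \forall i\in[t],$$ and let $R_i=R_{i,\hat b_i+1}$ be the first $\hat b_i+1$ greedy centers of $P_i$. Then $\{R_i:i\in[t]\}$ is a feasible solution of the \textsc{BestReps} problem with objective value at most $2$ times the optimal value of \textsc{BestReps}.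
   Context: For $x\in P$ and $R\subseteq P$ nonempty, $\mathrm{cost}(P,R)=\max_{x\in P}\min_{r\in R}d(x,r)$. The \textsc{BestReps} problem with budget $b$: choose sets $R_i\subseteq P_i$, $i\in[t]$, minimizing $\sum_{i=1}^t\mathrm{cost}(P_i,R_i)$ subject to $|R_i|\ge1$ for all $i$ and $\sum_{i=1}^t(|R_i|-1)\le b$. The greedy $k$-center procedure on a set $P$: choose an arbitrary first center; at each subsequent step $j\le k$, choose as the $j$th center a point of $P$ at maximum distance from the set of the first $j-1$ centers (ties broken arbitrarily). (If $P$ has fewer than $j$ points, the first $j$ centers are understood to be all of $P$.) *)

theory Defs
  imports Complex_Main
begin

definition metric_on :: "'a set \<Rightarrow> ('a \<Rightarrow> 'a \<Rightarrow> real) \<Rightarrow> bool" where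
  "metric_on X d \<longleftrightarrow>
     (\<forall>x\<in>X. \<forall>y\<in>X. d x y \<ge> 0 \<and> (d x y = 0 \<longleftrightarrow> x = y) \<and> d x y = d y x) \<and>
     (\<forall>x\<in>X. \<forall>y\<in>X. \<forall>z\<in>X. d x z \<le> d x y + d y z)"

definition is_partition :: "'a set \<Rightarrow> nat \<Rightarrow> (nat \<Rightarrow> 'a set) \<Rightarrow> bool" where
  "is_partition X t P \<longleftrightarrow>
     (\<forall>i<t. P i \<noteq> {}) \<and> (\<forall>i<t. \<forall>j<t. i \<noteq> j \<longrightarrow> P i \<inter> P j = {}) \<and>
     (\<Union>i<t. P i) = X"

definition dist_set :: "('a \<Rightarrow> 'a \<Rightarrow> real) \<Rightarrow> 'a \<Rightarrow> 'a set \<Rightarrow> real" where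
  "dist_set d x R = Min ((\<lambda>r. d x r) ` R)"

definition cost :: "('a \<Rightarrow> 'a \<Rightarrow> real) \<Rightarrow> 'a set \<Rightarrow> 'a set \<Rightarrow> real" where
  "cost d P R = Max ((\<lambda>x. dist_set d x R) ` P)"

text \<open>cs is a possible output (ordered list of centers) of the greedy k-center procedure on P:
  arbitrary first center, each later center at maximum distance from the previous ones
  (arbitrary tie breaking); it stops after k centers or when P is exhausted.\<close>
definition greedy_centers :: "('a \<Rightarrow> 'a \<Rightarrow> real) \<Rightarrow> 'a set \<Rightarrow> nat \<Rightarrow> 'a list \<Rightarrow> bool" where
  "greedy_centers d P k cs \<longleftrightarrow>
     length cs = min k (card P) \<and> set cs \<subseteq> P \<and>
     (\<forall>j. 0 < j \<and> j < length cs \<longrightarrow>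
        (\<forall>y\<in>P. dist_set d y (set (take j cs)) \<le> dist_set d (cs ! j) (set (take j cs))))"

definition bestreps_feasible :: "nat \<Rightarrow> (nat \<Rightarrow> 'a set) \<Rightarrow> nat \<Rightarrow> (nat \<Rightarrow> 'a set) \<Rightarrow> bool" where
  "bestreps_feasible t P b R \<longleftrightarrow>
     (\<forall>i<t. R i \<subseteq> P i \<and> card (R i) \<ge> 1) \<and> (\<Sum>i<t. card (R i) - 1) \<le> b"

end

theory Submission
  imports Defs
begin

text \<open>
  Farthest-first traversal is a 2-approximation for every prefix length simultaneously: if the
  first \<open>m\<close> greedy centers of a block leave a point at distance \<open>r\<close>, then these centers together
  with that point are \<open>m + 1\<close> points pairwise at distance at least \<open>r\<close>, and any \<open>m\<close> representatives
  serve two of them from a common point, so by the triangle inequality they have cost at least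
  \<open>r / 2\<close>. Given any feasible solution of BestReps, raise its budget vector to one summing to
  exactly \<open>b\<close>; the greedy prefixes for that vector cost at most twice as much block by block, and
  the optimal budget vector does at least as well.
\<close>

lemma metric_on_nonneg: "metric_on X d \<Longrightarrow> x \<in> X \<Longrightarrow> y \<in> X \<Longrightarrow> 0 \<le> d x y"
  unfolding metric_on_def by simp

lemma metric_on_self: "metric_on X d \<Longrightarrow> x \<in> X \<Longrightarrow> d x x = 0"
  unfolding metric_on_def by simp

lemma metric_on_sym: "metric_on X d \<Longrightarrow> x \<in> X \<Longrightarrow> y \<in> X \<Longrightarrow> d x y = d y x"
  unfolding metric_on_def by simp

lemma metric_on_triangle:
  "metric_on X d \<Longrightarrow> x \<in> X \<Longrightarrow> y \<in> X \<Longrightarrow> z \<in> X \<Longrightarrow> d x z \<le> d x y + d y z"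
  unfolding metric_on_def by simp

lemma dist_set_le: "finite R \<Longrightarrow> r \<in> R \<Longrightarrow> dist_set d x R \<le> d x r"
  unfolding dist_set_def by (rule Min_le) auto

lemma dist_set_attained:
  assumes "finite R" "R \<noteq> {}"
  obtains r where "r \<in> R" "dist_set d x R = d x r"
proof -
  have "Min ((\<lambda>r. d x r) ` R) \<in> (\<lambda>r. d x r) ` R" using assms by (intro Min_in) auto
  then show ?thesis using that unfolding dist_set_def by auto
qed

lemma dist_set_antimono:
  "finite B \<Longrightarrow> A \<subseteq> B \<Longrightarrow> A \<noteq> {} \<Longrightarrow> dist_set d x B \<le> dist_set d x A"
  unfolding dist_set_def by (rule Min_antimono) auto

lemma dist_set_le_cost: "finite P \<Longrightarrow> x \<in> P \<Longrightarrow> dist_set d x R \<le> cost d P R"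
  unfolding cost_def by (rule Max_ge) auto

lemma cost_attained:
  assumes "finite P" "P \<noteq> {}"
  obtains x where "x \<in> P" "cost d P R = dist_set d x R"
proof -
  have "Max ((\<lambda>x. dist_set d x R) ` P) \<in> (\<lambda>x. dist_set d x R) ` P" using assms by (intro Max_in) auto
  then show ?thesis using that unfolding cost_def by auto
qed

lemma cost_antimono:
  assumes "finite P" "P \<noteq> {}" "finite B" "A \<subseteq> B" "A \<noteq> {}"
  shows "cost d P B \<le> cost d P A"
proof -
  obtain x where x: "x \<in> P" "cost d P B = dist_set d x B"
    using cost_attained[OF assms(1,2)] .
  note x(2)
  also have "dist_set d x B \<le> dist_set d x A" using assms(3-5) by (rule dist_set_antimono)
  also have "\<dots> \<le> cost d P A" using assms(1) x(1) by (rule dist_set_le_cost)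
  finally show ?thesis .
qed

lemma cost_nonneg:
  assumes "metric_on X d" "P \<subseteq> X" "finite P" "P \<noteq> {}" "R \<subseteq> X" "finite R" "R \<noteq> {}"
  shows "0 \<le> cost d P R"
proof -
  obtain x where x: "x \<in> P" using assms(4) by blast
  obtain r where r: "r \<in> R" "dist_set d x R = d x r" using dist_set_attained[OF assms(6,7)] .
  have "0 \<le> d x r" using metric_on_nonneg[OF assms(1)] assms(2,5) x r(1) by blast
  then show ?thesis using dist_set_le_cost[OF assms(3) x, of d R] r(2) by linarith
qed

lemma cost_self:
  assumes "metric_on X d" "P \<subseteq> X" "finite P" "P \<noteq> {}"
  shows "cost d P P = 0"
proof -
  obtain x where x: "x \<in> P" "cost d P P = dist_set d x P" using cost_attained[OF assms(3,4)] .
  have "dist_set d x P \<le> d x x" using assms(3) x(1) by (rule dist_set_le)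
  also have "d x x = 0" using metric_on_self[OF assms(1)] assms(2) x(1) by blast
  finally show ?thesis using x(2) cost_nonneg[OF assms(1,2,3,4,2,3,4)] by linarith
qed

text \<open>Two of the \<open>m + 1\<close> points share a nearest point of \<open>Q\<close>.\<close>

lemma separated_points_le_twice_cost:
  assumes met: "metric_on X d" and PX: "P \<subseteq> X" and fP: "finite P"
    and QX: "Q \<subseteq> X" and fQ: "finite Q" and Qne: "Q \<noteq> {}" and card_Q: "card Q \<le> m"
    and gP: "\<And>i. i \<le> m \<Longrightarrow> g i \<in> P"
    and sep: "\<And>i j. i \<le> m \<Longrightarrow> j \<le> m \<Longrightarrow> i \<noteq> j \<Longrightarrow> r \<le> d (g i) (g j)"
  shows "r \<le> 2 * cost d P Q"
proof -
  have "\<exists>c. c \<in> Q \<and> dist_set d x Q = d x c" for x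
    using dist_set_attained[OF fQ Qne] by blast
  then obtain nearest where nearest: "\<And>x. nearest x \<in> Q \<and> dist_set d x Q = d x (nearest x)"
    by metis
  have "\<not> inj_on (nearest \<circ> g) {..m}"
  proof
    assume "inj_on (nearest \<circ> g) {..m}"
    moreover have "(nearest \<circ> g) ` {..m} \<subseteq> Q" using nearest by auto
    ultimately have "card {..m} \<le> card Q" using fQ by (rule card_inj_on_le)
    then show False using card_Q by simp
  qed
  then obtain i j where ij: "i \<le> m" "j \<le> m" "i \<noteq> j" "nearest (g i) = nearest (g j)"
    unfolding inj_on_def by auto
  define c where "c = nearest (g i)"
  have cX: "c \<in> X" using nearest QX unfolding c_def by blast
  have giX: "g i \<in> X" and gjX: "g j \<in> X" using gP ij(1,2) PX by blast+
  have "r \<le> d (g i) (g j)" using sep ij(1-3) .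
  also have "\<dots> \<le> d (g i) c + d c (g j)" using metric_on_triangle[OF met giX cX gjX] .
  also have "\<dots> = dist_set d (g i) Q + dist_set d (g j) Q"
    using nearest[of "g i"] nearest[of "g j"] ij(4) metric_on_sym[OF met cX gjX]
    unfolding c_def by simp
  also have "\<dots> \<le> 2 * cost d P Q"
    using dist_set_le_cost[OF fP gP[OF ij(1)], of d Q] dist_set_le_cost[OF fP gP[OF ij(2)], of d Q]
    by linarith
  finally show ?thesis .
qed

lemma greedy_centers_length: "greedy_centers d P k cs \<Longrightarrow> length cs = min k (card P)"
  unfolding greedy_centers_def by simp

lemma greedy_centers_subset: "greedy_centers d P k cs \<Longrightarrow> set cs \<subseteq> P"
  unfolding greedy_centers_def by simp

lemma greedy_centers_nonempty:
  assumes "greedy_centers d P k cs" "0 < k" "finite P" "P \<noteq> {}"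
  shows "cs \<noteq> []"
proof -
  have "0 < card P" using assms(3,4) by (simp add: card_gt_0_iff)
  then show ?thesis using greedy_centers_length[OF assms(1)] assms(2) by auto
qed

lemma greedy_center_dist_ge_cost:
  assumes gr: "greedy_centers d P k cs" and fP: "finite P" and ij: "i < j" "j < length cs"
  shows "cost d P (set (take j cs)) \<le> d (cs ! j) (cs ! i)"
proof -
  have "P \<noteq> {}" using greedy_centers_subset[OF gr] nth_mem[OF ij(2)] by blast
  then obtain y where y: "y \<in> P" "cost d P (set (take j cs)) = dist_set d y (set (take j cs))"
    using cost_attained[OF fP] by blast
  have "dist_set d y (set (take j cs)) \<le> dist_set d (cs ! j) (set (take j cs))"
    using gr y(1) ij unfolding greedy_centers_def by auto
  also have "\<dots> \<le> d (cs ! j) (cs ! i)"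
    using ij by (intro dist_set_le) (auto simp: in_set_conv_nth)
  finally show ?thesis using y(2) by simp
qed

text \<open>The witnesses are the first \<open>m\<close> greedy centers followed by a point realizing the cost.\<close>

lemma greedy_prefix_separated:
  assumes met: "metric_on X d" and PX: "P \<subseteq> X" and fP: "finite P"
    and gr: "greedy_centers d P k cs" and m: "0 < m" "m \<le> length cs"
  obtains g where "\<And>i. i \<le> m \<Longrightarrow> g i \<in> P"
    and "\<And>i j. i \<le> m \<Longrightarrow> j \<le> m \<Longrightarrow> i \<noteq> j \<Longrightarrow> cost d P (set (take m cs)) \<le> d (g i) (g j)"
proof -
  define C where "C = set (take m cs)"
  have csP: "set cs \<subseteq> P" using gr by (rule greedy_centers_subset)
  have C_ne: "C \<noteq> {}" using m unfolding C_def by auto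
  have "C \<subseteq> P" using set_take_subset[of m cs] csP unfolding C_def by (rule order.trans)
  then have P_ne: "P \<noteq> {}" using C_ne by blast
  obtain x where x: "x \<in> P" "cost d P C = dist_set d x C" using cost_attained[OF fP P_ne] .
  define g where "g i = (if i < m then cs ! i else x)" for i
  have gP: "g i \<in> P" if "i \<le> m" for i
    using that m(2) csP x(1) unfolding g_def by (auto dest: nth_mem)
  have sep: "cost d P C \<le> d (g j) (g i)" if ij: "i < j" "j \<le> m" for i j
  proof (cases "j < m")
    case True
    have "set (take j cs) \<noteq> {}" using ij m by auto
    then have "cost d P C \<le> cost d P (set (take j cs))"
      using True unfolding C_def by (intro cost_antimono fP P_ne) (auto simp: set_take_subset_set_take)
    also have "\<dots> \<le> d (cs ! j) (cs ! i)"
      using greedy_center_dist_ge_cost[OF gr fP ij(1)] True m(2) by simp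
    finally show ?thesis using ij True unfolding g_def by simp
  next
    case False
    have "cs ! i = take m cs ! i" using ij by simp
    also have "\<dots> \<in> C" using ij m(2) unfolding C_def by (intro nth_mem) simp
    finally have "cs ! i \<in> C" .
    then have "dist_set d x C \<le> d x (cs ! i)" by (intro dist_set_le) (simp_all add: C_def)
    then show ?thesis using ij False x(2) unfolding g_def by simp
  qed
  show ?thesis
  proof (rule that[OF gP])
    fix i j assume ij: "i \<le> m" "j \<le> m" "i \<noteq> j"
    have "d (g i) (g j) = d (g j) (g i)" using metric_on_sym[OF met] gP ij PX by blast
    then show "cost d P (set (take m cs)) \<le> d (g i) (g j)"
      using sep[of i j] sep[of j i] ij unfolding C_def by (cases "i < j") auto
  qed
qed

lemma greedy_prefix_cost_le_twice:
  assumes met: "metric_on X d" and PX: "P \<subseteq> X" and fP: "finite P"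
    and gr: "greedy_centers d P k cs" and mk: "m \<le> k"
    and QP: "Q \<subseteq> P" and Q_ne: "Q \<noteq> {}" and card_Q: "card Q \<le> m"
  shows "cost d P (set (take m cs)) \<le> 2 * cost d P Q"
proof -
  have fQ: "finite Q" using QP fP by (rule finite_subset)
  have QX: "Q \<subseteq> X" using QP PX by blast
  have P_ne: "P \<noteq> {}" using QP Q_ne by blast
  define m' where "m' = min m (length cs)"
  have "0 < card Q" using fQ Q_ne by (simp add: card_gt_0_iff)
  then have "0 < m" using card_Q by linarith
  moreover have "0 < length cs"
    using greedy_centers_nonempty[OF gr _ fP P_ne] mk \<open>0 < m\<close> by simp
  ultimately have "0 < m'" unfolding m'_def by simp
  have take_m: "take m cs = take m' cs" unfolding m'_def by (simp add: min_def)
  obtain g where gP: "\<And>i. i \<le> m' \<Longrightarrow> g i \<in> P"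
    and sep: "\<And>i j. i \<le> m' \<Longrightarrow> j \<le> m' \<Longrightarrow> i \<noteq> j \<Longrightarrow> cost d P (set (take m cs)) \<le> d (g i) (g j)"
    using greedy_prefix_separated[OF met PX fP gr \<open>0 < m'\<close>] unfolding take_m m'_def by auto
  show ?thesis
  proof (cases "m' = m")
    case True
    show ?thesis
      using separated_points_le_twice_cost[OF met PX fP QX fQ Q_ne, of m' g] card_Q gP sep True by simp
  next
    case False
    text \<open>The greedy procedure ran out of points, so its centers are all of \<open>P\<close> and cost nothing.\<close>
    then have "m' = card P" using greedy_centers_length[OF gr] mk unfolding m'_def by auto
    then have "cost d P (set (take m cs)) \<le> 2 * cost d P P"
      using separated_points_le_twice_cost[OF met PX fP PX fP P_ne, of m' g] gP sep by simp
    then show ?thesis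
      using cost_self[OF met PX fP P_ne] cost_nonneg[OF met PX fP P_ne QX fQ Q_ne] by simp
  qed
qed

lemma bestreps_feasible_greedy_prefixes:
  assumes "\<And>i. i < t \<Longrightarrow> greedy_centers d (P i) k (cs i)" and "0 < k"
    and "\<And>i. i < t \<Longrightarrow> finite (P i) \<and> P i \<noteq> {}" and "(\<Sum>i<t. bh i) \<le> b"
  shows "bestreps_feasible t P b (\<lambda>i. set (take (bh i + 1) (cs i)))"
  unfolding bestreps_feasible_def
proof (intro conjI allI impI)
  fix i assume i: "i < t"
  have "set (take (bh i + 1) (cs i)) \<subseteq> set (cs i)" by (rule set_take_subset)
  then show "set (take (bh i + 1) (cs i)) \<subseteq> P i"
    using greedy_centers_subset[OF assms(1)[OF i]] by blast
  have "cs i \<noteq> []" using greedy_centers_nonempty[OF assms(1)[OF i] assms(2)] assms(3)[OF i] by blast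
  then show "1 \<le> card (set (take (bh i + 1) (cs i)))"
    by (cases "cs i") (auto simp: Suc_le_eq card_gt_0_iff)
next
  have "card (set (take (bh i + 1) (cs i))) \<le> bh i + 1" for i
    using card_length[of "take (bh i + 1) (cs i)"] by simp
  then have "card (set (take (bh i + 1) (cs i))) - 1 \<le> bh i" for i
    by (simp add: le_diff_conv)
  then have "(\<Sum>i<t. card (set (take (bh i + 1) (cs i))) - 1) \<le> (\<Sum>i<t. bh i)"
    by (intro sum_mono)
  then show "(\<Sum>i<t. card (set (take (bh i + 1) (cs i))) - 1) \<le> b" using assms(4) by linarith
qed

lemma exists_sum_eq_ge:
  fixes q :: "nat \<Rightarrow> nat"
  assumes "0 < t" "(\<Sum>i<t. q i) \<le> b"
  obtains bb where "(\<Sum>i<t. bb i) = b" "\<And>i. q i \<le> bb i"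
proof
  define bb where "bb i = q i + (if i = 0 then b - (\<Sum>i<t. q i) else 0)" for i
  show "(\<Sum>i<t. bb i) = b" using assms unfolding bb_def by (simp add: sum.distrib)
  show "q i \<le> bb i" for i unfolding bb_def by simp
qed

lemma greedy_allocation_le_twice_bestreps:
  assumes met: "metric_on X d" and PX: "\<And>i. i < t \<Longrightarrow> P i \<subseteq> X"
    and fP: "\<And>i. i < t \<Longrightarrow> finite (P i)"
    and greedy: "\<And>i. i < t \<Longrightarrow> greedy_centers d (P i) (b + 1) (cs i)"
    and bh_opt: "\<And>bb :: nat \<Rightarrow> nat. (\<Sum>i<t. bb i) = b \<Longrightarrow>
        (\<Sum>i<t. cost d (P i) (set (take (bh i + 1) (cs i))))
          \<le> (\<Sum>i<t. cost d (P i) (set (take (bb i + 1) (cs i))))"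
    and Q: "bestreps_feasible t P b Q"
  shows "(\<Sum>i<t. cost d (P i) (set (take (bh i + 1) (cs i)))) \<le> 2 * (\<Sum>i<t. cost d (P i) (Q i))"
proof (cases "t = 0")
  case False
  have Q_sub: "Q i \<subseteq> P i" and Q_ne: "Q i \<noteq> {}" if "i < t" for i
    using Q that unfolding bestreps_feasible_def by auto
  obtain bb where bb_sum: "(\<Sum>i<t. bb i) = b" and bb_ge: "\<And>i. card (Q i) - 1 \<le> bb i"
    using exists_sum_eq_ge[of t "\<lambda>i. card (Q i) - 1" b] False Q
    unfolding bestreps_feasible_def by auto
  have bb_cost: "cost d (P i) (set (take (bb i + 1) (cs i))) \<le> 2 * cost d (P i) (Q i)"
    if i: "i < t" for i
  proof (rule greedy_prefix_cost_le_twice[OF met PX[OF i] fP[OF i] greedy[OF i]])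
    show "bb i + 1 \<le> b + 1" using i bb_sum member_le_sum[of i "{..<t}" bb] by simp
    show "Q i \<subseteq> P i" "Q i \<noteq> {}" using i by (rule Q_sub, rule Q_ne)
    show "card (Q i) \<le> bb i + 1" using bb_ge[of i] by linarith
  qed
  have "(\<Sum>i<t. cost d (P i) (set (take (bh i + 1) (cs i))))
      \<le> (\<Sum>i<t. cost d (P i) (set (take (bb i + 1) (cs i))))"
    using bb_sum by (rule bh_opt)
  also have "\<dots> \<le> (\<Sum>i<t. 2 * cost d (P i) (Q i))" using bb_cost by (intro sum_mono) simp
  also have "\<dots> = 2 * (\<Sum>i<t. cost d (P i) (Q i))" by (simp add: sum_distrib_left)
  finally show ?thesis .
qed simp

theorem theorem3:
  fixes X :: "'a set" and d :: "'a \<Rightarrow> 'a \<Rightarrow> real" and t b :: nat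
    and P :: "nat \<Rightarrow> 'a set" and cs :: "nat \<Rightarrow> 'a list" and bh :: "nat \<Rightarrow> nat"
  assumes "finite X" and "metric_on X d" and "is_partition X t P"
    and greedy: "\<forall>i<t. greedy_centers d (P i) (b + 1) (cs i)"
    and bh_feas: "(\<Sum>i<t. bh i) = b"
    and bh_opt: "\<forall>bb :: nat \<Rightarrow> nat. (\<Sum>i<t. bb i) = b \<longrightarrow>
        (\<Sum>i<t. cost d (P i) (set (take (bh i + 1) (cs i))))
          \<le> (\<Sum>i<t. cost d (P i) (set (take (bb i + 1) (cs i))))"
  shows "bestreps_feasible t P b (\<lambda>i. set (take (bh i + 1) (cs i))) \<and>
    (\<forall>Q. bestreps_feasible t P b Q \<longrightarrow>
       (\<Sum>i<t. cost d (P i) (set (take (bh i + 1) (cs i)))) \<le> 2 * (\<Sum>i<t. cost d (P i) (Q i)))"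
proof -
  have PX: "P i \<subseteq> X" and P_ne: "P i \<noteq> {}" and fP: "finite (P i)" if "i < t" for i
    using assms(1,3) that finite_subset unfolding is_partition_def by auto
  have "bestreps_feasible t P b (\<lambda>i. set (take (bh i + 1) (cs i)))"
    by (rule bestreps_feasible_greedy_prefixes) (use greedy fP P_ne bh_feas in auto)
  moreover have "(\<Sum>i<t. cost d (P i) (set (take (bh i + 1) (cs i)))) \<le> 2 * (\<Sum>i<t. cost d (P i) (Q i))"
    if "bestreps_feasible t P b Q" for Q
    by (rule greedy_allocation_le_twice_bestreps[OF assms(2)]) (use PX fP greedy bh_opt that in auto)
  ultimately show ?thesis by blast
qed

end
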